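(* Let $p/q$ be a positive rational in lowest terms ($p,q\ge1$), and write $p=p_1^2+p_2^2+p_3^2+p_4^2$ with integers $p_j\ge0$. Put $A=p_1^2-p_2^2+p_3^2-p_4^2$, $B=p_1p_2+p_3p_4$, $C=p_1p_4-p_2p_3$. Then there exist integers $a,b,\gamma$ such that $$\Delta:=bA+2(\gamma-a)B+(1-b^2+4a\gamma)C$$ is relatively prime to $q$.
   Context: Equivalently, $\Delta=r_1r_4-r_2r_3$ where $r_1=-p_1-2\gamma p_3+bp_4$, $r_2=p_2+2ap_4-bp_3$, $r_3=p_3-2\gamma p_1+bp_2$, $r_4=-p_4+2ap_2-bp_1$. *)

theory Defs
  imports Main
begin

end

theory Submission
  imports Defs "HOL-Computational_Algebra.Primes"
begin

text \<open>
  The coefficients of \<open>\<Delta> = bA + 2(\<gamma> - a)B + (1 - b\<^sup>2 + 4a\<gamma>)C\<close> satisfy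
  \<open>A\<^sup>2 + 4B\<^sup>2 + 4C\<^sup>2 = p\<^sup>2\<close>; together with \<open>p \<equiv> A (mod 2)\<close> this shows that no prime
  divisor \<open>l\<close> of \<open>q\<close> divides all of \<open>A\<close>, \<open>2B\<close>, \<open>4C\<close>. Taking \<open>b = 1\<close>, \<open>\<gamma> = s\<close>,
  \<open>a = st\<close> gives \<open>\<Delta> = A + s(1 - t)\<cdot>2B + s\<^sup>2t\<cdot>4C\<close>, and suitable products \<open>s\<close>, \<open>t\<close>
  of prime factors of \<open>q\<close> make \<open>\<Delta>\<close> a unit modulo every such \<open>l\<close>: \<open>s\<close> is divisible
  exactly by those \<open>l\<close> not dividing \<open>A\<close>, and \<open>t\<close> exactly by those dividing \<open>A\<close> but not \<open>2B\<close>.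
\<close>

lemma coprime_if_no_prime_divisor_dvd:
  fixes a b :: "'a :: factorial_semiring"
  assumes "b \<noteq> 0" and "\<And>l. prime l \<Longrightarrow> l dvd b \<Longrightarrow> \<not> l dvd a"
  shows "coprime a b"
proof (rule coprimeI)
  fix c assume "c dvd a" and "c dvd b"
  show "is_unit c"
  proof (rule ccontr)
    assume "\<not> is_unit c"
    moreover have "c \<noteq> 0" using \<open>c dvd b\<close> assms(1) by auto
    ultimately obtain l where "prime l" "l dvd c" using prime_divisor_exists by blast
    then show False using assms(2) \<open>c dvd a\<close> \<open>c dvd b\<close> dvd_trans by blast
  qed
qed

lemma exists_dvd_iff_on_prime_divisors:
  fixes q :: "'a :: factorial_semiring"
  assumes "q \<noteq> 0"
  shows "\<exists>s. \<forall>l. prime l \<longrightarrow> l dvd q \<longrightarrow> (l dvd s \<longleftrightarrow> S l)"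
proof (intro exI allI impI)
  fix l assume l: "prime l" "l dvd q"
  let ?F = "{k \<in> prime_factors q. S k}"
  have "l dvd \<Prod>?F \<longleftrightarrow> (\<exists>k\<in>?F. l dvd k)"
    using l(1) by (intro prime_dvd_prod_iff) auto
  also have "\<dots> \<longleftrightarrow> l \<in> ?F"
  proof
    assume "\<exists>k\<in>?F. l dvd k"
    then obtain k where "k \<in> ?F" and "l dvd k" by blast
    then have "l = k" using l(1) by (intro primes_dvd_imp_eq) auto
    with \<open>k \<in> ?F\<close> show "l \<in> ?F" by simp
  qed auto
  also have "\<dots> \<longleftrightarrow> S l"
    using l assms by (auto simp: in_prime_factors_iff)
  finally show "l dvd \<Prod>?F \<longleftrightarrow> S l" .
qed

lemma exists_coprime_combination:
  fixes x y z q :: "'a :: factorial_ring_gcd"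
  assumes "q \<noteq> 0"
    and "\<And>l. prime l \<Longrightarrow> l dvd q \<Longrightarrow> \<not> (l dvd x \<and> l dvd y \<and> l dvd z)"
  shows "\<exists>s t. coprime (x + s * (1 - t) * y + s^2 * t * z) q"
proof -
  obtain s where s: "\<And>l. prime l \<Longrightarrow> l dvd q \<Longrightarrow> l dvd s \<longleftrightarrow> \<not> l dvd x"
    using exists_dvd_iff_on_prime_divisors[OF assms(1), where S = "\<lambda>l. \<not> l dvd x"] by blast
  obtain t where t: "\<And>l. prime l \<Longrightarrow> l dvd q \<Longrightarrow> l dvd t \<longleftrightarrow> l dvd x \<and> \<not> l dvd y"
    using exists_dvd_iff_on_prime_divisors[OF assms(1), where S = "\<lambda>l. l dvd x \<and> \<not> l dvd y"] by blast
  define u v where "u = s * (1 - t) * y" and "v = s^2 * t * z"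
  have "\<not> l dvd x + u + v" if l: "prime l" "l dvd q" for l
  proof (cases "l dvd x")
    case False
    then have "l dvd u" "l dvd v" using s[OF l] by (simp_all add: u_def v_def power2_eq_square)
    with False show ?thesis by (simp add: dvd_add_left_iff)
  next
    case True
    then have "\<not> l dvd s" using s[OF l] by simp
    show ?thesis
    proof (cases "l dvd y")
      case False
      with True have "l dvd t" using t[OF l] by simp
      then have "\<not> l dvd 1 - t"
        using l(1) dvd_add[of l "1 - t" t] by auto
      with \<open>\<not> l dvd s\<close> False l(1) have "\<not> l dvd u"
        by (simp add: u_def prime_dvd_mult_iff)
      moreover have "l dvd v" using \<open>l dvd t\<close> by (simp add: v_def)
      ultimately show ?thesis using True by (simp add: dvd_add_left_iff dvd_add_right_iff)
    next
      case True
      with \<open>l dvd x\<close> have "\<not> l dvd z" "\<not> l dvd t" using assms(2)[OF l] t[OF l] by auto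
      with \<open>\<not> l dvd s\<close> l(1) have "\<not> l dvd v"
        by (simp add: v_def prime_dvd_mult_iff prime_dvd_power_iff)
      moreover have "l dvd x + u" using True \<open>l dvd x\<close> by (simp add: u_def)
      ultimately show ?thesis by (simp add: dvd_add_right_iff)
    qed
  qed
  then show ?thesis
    unfolding u_def v_def using coprime_if_no_prime_divisor_dvd[OF assms(1)] by blast
qed

lemma prime_dvd_coefficients_imp_dvd_sum_four_squares:
  fixes l p1 p2 p3 p4 :: "'a :: factorial_ring_gcd"
  assumes "prime l"
    and "l dvd p1^2 - p2^2 + p3^2 - p4^2"
    and "l dvd 2 * (p1 * p2 + p3 * p4)"
    and "l dvd 4 * (p1 * p4 - p2 * p3)"
  shows "l dvd p1^2 + p2^2 + p3^2 + p4^2"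
proof -
  define p A B C where "p = p1^2 + p2^2 + p3^2 + p4^2" and "A = p1^2 - p2^2 + p3^2 - p4^2"
    and "B = 2 * (p1 * p2 + p3 * p4)" and "C = 4 * (p1 * p4 - p2 * p3)"
  have "2 * 2 * (p * p) = 4 * A^2 + 4 * B^2 + C^2"
    unfolding p_def A_def B_def C_def by algebra
  also have "l dvd \<dots>"
    using assms(2-4) unfolding A_def[symmetric] B_def[symmetric] C_def[symmetric]
    by (intro dvd_add dvd_mult) (simp_all add: power2_eq_square)
  finally have "l dvd 2 \<or> l dvd p" using assms(1) by (simp only: prime_dvd_mult_iff disj_absorb)
  moreover have "p = A + 2 * (p2^2 + p4^2)" unfolding p_def A_def by algebra
  ultimately show ?thesis
    using assms(2) unfolding p_def[symmetric] A_def[symmetric] by (metis dvd_add dvd_mult2)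
qed

theorem proposition3p1:
  fixes p q p1 p2 p3 p4 :: int
  assumes "p \<ge> 1" and "q \<ge> 1" and "coprime p q"
    and "p1 \<ge> 0" and "p2 \<ge> 0" and "p3 \<ge> 0" and "p4 \<ge> 0"
    and "p = p1^2 + p2^2 + p3^2 + p4^2"
  shows "\<exists>a b \<gamma> :: int.
           coprime (b * (p1^2 - p2^2 + p3^2 - p4^2)
                    + 2 * (\<gamma> - a) * (p1 * p2 + p3 * p4)
                    + (1 - b^2 + 4 * a * \<gamma>) * (p1 * p4 - p2 * p3)) q"
proof -
  define A where "A = p1^2 - p2^2 + p3^2 - p4^2"
  define B where "B = p1 * p2 + p3 * p4"
  define C where "C = p1 * p4 - p2 * p3"
  have "\<not> (l dvd A \<and> l dvd 2 * B \<and> l dvd 4 * C)" if "prime l" "l dvd q" for l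
  proof
    assume "l dvd A \<and> l dvd 2 * B \<and> l dvd 4 * C"
    then have "l dvd p"
      using prime_dvd_coefficients_imp_dvd_sum_four_squares \<open>prime l\<close>
      unfolding assms(8) A_def B_def C_def by blast
    then show False
      using assms(3) that by (meson coprime_common_divisor not_prime_unit)
  qed
  then obtain s t where combination_coprime: "coprime (A + s * (1 - t) * (2 * B) + s^2 * t * (4 * C)) q"
    using exists_coprime_combination[of q A "2 * B" "4 * C"] assms(2) by auto
  have combination_eq: "A + s * (1 - t) * (2 * B) + s^2 * t * (4 * C)
      = 1 * A + 2 * (s - s * t) * B + (1 - 1^2 + 4 * (s * t) * s) * C"
    by (simp add: algebra_simps power2_eq_square)
  show ?thesis
    using combination_coprime unfolding combination_eq unfolding A_def B_def C_def by blast
qed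

end
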